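(* Let $\mathbf t_1,\mathbf t_2$ be hyper-terms that agree on $\mathrm{supp}(\mathbf t_1)\cap\mathrm{supp}(\mathbf t_2)$, and $Q_1,Q_2$ post hyper-assertions such that $\mathrm{idx}(Q_1)\cap\mathrm{supp}(\mathbf t_2)\subseteq\mathrm{supp}(\mathbf t_1)$ and $\mathrm{idx}(Q_2)\cap\mathrm{supp}(\mathbf t_1)\subseteq\mathrm{supp}(\mathbf t_2)$. Then $$\mathrm{wp}\,\mathbf t_1\,\{Q_1\}\wedge\mathrm{wp}\,\mathbf t_2\,\{Q_2\}\ \vdash\ \mathrm{wp}\,(\mathbf t_1+\mathbf t_2)\,\{\lambda\mathbf r.\ Q_1(\mathbf r)\wedge Q_2(\mathbf r)\}.$$
   Context: Setting. $\mathrm{Val}=\mathbb{Z}$; $\mathrm{PVar}$ is a countably infinite set of program variables; a store is a function $s:\mathrm{PVar}\to\mathrm{Val}$; indices are $\mathrm{Idx}=\mathbb{N}$. Terms of a first-order imperative language are generated by $t ::= v \mid x \mid * \mid t\oplus t \mid \mathtt{skip}\mid x:=t \mid t;t \mid \mathtt{if}\ t\ \mathtt{then}\ t\ \mathtt{else}\ t \mid \mathtt{while}\ t\ \mathtt{do}\ t$, with a nondeterministic big-step semantics $t,s\Downarrow v,s'$. A hyper-term $\mathbf t$ is a finitely supported partial function from $\mathrm{Idx}$ to terms; a hyper-store is a total function $\mathbf s:\mathrm{Idx}\to\mathrm{Store}$; a hyper-return-value is a finitely supported partial function $\mathbf v:\mathrm{Idx}\rightharpoonup\mathrm{Val}$.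 For partial maps $\mathbf f,\mathbf g$ agreeing on the intersection of their supports, $\mathbf f+\mathbf g$ is their union. $\mathbf t,\mathbf s\Downarrow\mathbf v,\mathbf s'$ holds iff for every $i\in\mathrm{supp}(\mathbf t)$, $\mathbf t(i),\mathbf s(i)\Downarrow\mathbf v(i),\mathbf s'(i)$, and for every $i\notin\mathrm{supp}(\mathbf t)$, $\mathbf s'(i)=\mathbf s(i)$ and $\mathbf v(i)$ is undefined. A hyper-assertion is a predicate on hyper-stores; a post hyper-assertion is an upward-closed map $Q$ from hyper-return-values to hyper-assertions (if $Q(\mathbf v)(\mathbf s)$ and $\mathbf v'$ agrees with $\mathbf v$ on $\mathrm{supp}(\mathbf v)$ then $Q(\mathbf v')(\mathbf s)$). Entailment $P\vdash R$ means $\forall\mathbf s.\ P(\mathbf s)\Rightarrow R(\mathbf s)$. $\mathrm{wp}\,\mathbf t\,\{Q\}(\mathbf s):\iff\forall\mathbf v,\mathbf s'.\ (\mathbf t,\mathbf s\Downarrow\mathbf v,\mathbf s')\Rightarrow Q(\mathbf v)(\mathbf s')$. Indices of a post hyper-assertion: $\mathrm{idx}(Q)=\mathrm{Idx}\setminus\{i\mid\forall\mathbf v,\mathbf s,s'.\ Q(\mathbf v)(\mathbf s)\Leftrightarrow Q(\mathbf v[i:\bot])(\mathbf s[i:s'])\}$, where $\mathbf v[i:\bot]$ makes $\mathbf v$ undefined at $i$ and $\mathbf s[i:s']$ is function update. *)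

theory Defs
  imports Main
begin

type_synonym val = int
type_synonym pvar = nat
type_synonym store = "pvar \<Rightarrow> val"
type_synonym idx = nat

datatype "term" =
    Val val
  | Var pvar
  | Star
  | BinOp "val \<Rightarrow> val \<Rightarrow> val" "term" "term"
  | Skip
  | Assign pvar "term"
  | Seq "term" "term"
  | If "term" "term" "term"
  | While "term" "term"

(* nondeterministic big-step semantics  t, s \<Down> v, s'.
   Conventions: nonzero = true; skip and while return 0; x := t returns the assigned value;
   t1;t2 returns the value of t2. *)
inductive bigstep :: "term \<Rightarrow> store \<Rightarrow> val \<Rightarrow> store \<Rightarrow> bool" where
  BVal: "bigstep (Val v) s v s"
| BVar: "bigstep (Var x) s (s x) s"
| BStar: "bigstep Star s v s"
| BBin: "bigstep t1 s v1 s1 \<Longrightarrow> bigstep t2 s1 v2 s2 \<Longrightarrow> bigstep (BinOp f t1 t2) s (f v1 v2) s2"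
| BSkip: "bigstep Skip s 0 s"
| BAssign: "bigstep t s v s1 \<Longrightarrow> bigstep (Assign x t) s v (s1(x := v))"
| BSeq: "bigstep t1 s v1 s1 \<Longrightarrow> bigstep t2 s1 v2 s2 \<Longrightarrow> bigstep (Seq t1 t2) s v2 s2"
| BIfT: "bigstep b s c s1 \<Longrightarrow> c \<noteq> 0 \<Longrightarrow> bigstep t1 s1 v s2 \<Longrightarrow> bigstep (If b t1 t2) s v s2"
| BIfF: "bigstep b s 0 s1 \<Longrightarrow> bigstep t2 s1 v s2 \<Longrightarrow> bigstep (If b t1 t2) s v s2"
| BWhileF: "bigstep b s 0 s1 \<Longrightarrow> bigstep (While b t) s 0 s1"
| BWhileT: "bigstep b s c s1 \<Longrightarrow> c \<noteq> 0 \<Longrightarrow> bigstep t s1 v1 s2 \<Longrightarrow>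
             bigstep (While b t) s2 v s3 \<Longrightarrow> bigstep (While b t) s v s3"

type_synonym hterm = "idx \<rightharpoonup> term"      (* finitely supported: finite (dom t) assumed *)
type_synonym hstore = "idx \<Rightarrow> store"
type_synonym hval = "idx \<rightharpoonup> val"        (* finitely supported *)
type_synonym hassn = "hstore \<Rightarrow> bool"
type_synonym post = "hval \<Rightarrow> hassn"

definition hbigstep :: "hterm \<Rightarrow> hstore \<Rightarrow> hval \<Rightarrow> hstore \<Rightarrow> bool" where
  "hbigstep t s v s' \<longleftrightarrow>
     (\<forall>i\<in>dom t. \<exists>vi. v i = Some vi \<and> bigstep (the (t i)) (s i) vi (s' i)) \<and>
     (\<forall>i. i \<notin> dom t \<longrightarrow> s' i = s i \<and> v i = None)"

definition upward_closed :: "post \<Rightarrow> bool" where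
  "upward_closed Q \<longleftrightarrow> (\<forall>v v' s. finite (dom v) \<and> finite (dom v') \<and> Q v s \<and> v \<subseteq>\<^sub>m v' \<longrightarrow> Q v' s)"

definition entails :: "hassn \<Rightarrow> hassn \<Rightarrow> bool" where
  "entails P R \<longleftrightarrow> (\<forall>s. P s \<longrightarrow> R s)"

definition wp :: "hterm \<Rightarrow> post \<Rightarrow> hassn" where
  "wp t Q s \<longleftrightarrow> (\<forall>v s'. hbigstep t s v s' \<longrightarrow> Q v s')"

definition idx :: "post \<Rightarrow> idx set" where
  "idx Q = UNIV - {i. \<forall>v s s'. finite (dom v) \<longrightarrow> (Q v s \<longleftrightarrow> Q (v(i := None)) (s(i := s')))}"

end

theory Submission
  imports Defs
begin

text \<open>Both conjuncts are instances of one frame rule: if \<open>t\<^sub>0 \<subseteq>\<^sub>m t\<close> and every index that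
  \<open>t\<close> executes beyond \<open>t\<^sub>0\<close> lies outside \<open>idx Q\<close>, then \<open>wp t\<^sub>0 {Q} \<turnstile> wp t {Q}\<close>.
  An execution of \<open>t\<close> restricts to an execution of \<open>t\<^sub>0\<close>, and the two final states differ only
  at indices \<open>Q\<close> cannot observe.  Since agreement on the common support makes \<open>t\<^sub>1 ++ t\<^sub>2\<close>
  extend both \<open>t\<^sub>1\<close> and \<open>t\<^sub>2\<close>, the rule applies to each side.\<close>

lemma post_upd_iff:
  assumes "i \<notin> idx Q" and "finite (dom v)"
  shows "Q v s \<longleftrightarrow> Q (v(i := a)) (s(i := b))"
proof -
  have forget: "Q w r \<longleftrightarrow> Q (w(i := None)) (r(i := x))" if "finite (dom w)" for w r x
    using assms(1) that unfolding idx_def by blast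
  have "Q v s \<longleftrightarrow> Q (v(i := None)) (s(i := s i))"
    using forget assms(2) by blast
  moreover have "finite (dom (v(i := a)))" using assms(2) by simp
  then have "Q (v(i := a)) (s(i := b)) \<longleftrightarrow> Q ((v(i := a))(i := None)) ((s(i := b))(i := s i))"
    by (rule forget)
  ultimately show ?thesis by simp
qed

lemma post_agree_outside:
  assumes "finite D" and "D \<inter> idx Q = {}"
    and "finite (dom v)" and "finite (dom v')"
    and "\<forall>i. i \<notin> D \<longrightarrow> v i = v' i \<and> s i = s' i"
  shows "Q v s \<longleftrightarrow> Q v' s'"
  using assms
proof (induction D arbitrary: v s rule: finite_induct)
  case empty
  then have "v = v'" and "s = s'" by auto
  then show ?case by simp
next
  case (insert i D)
  have "Q v s \<longleftrightarrow> Q (v(i := v' i)) (s(i := s' i))"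
    using insert.prems by (intro post_upd_iff) auto
  also have "\<dots> \<longleftrightarrow> Q v' s'"
  proof (rule insert.IH)
    have "dom (v(i := v' i)) \<subseteq> dom v \<union> dom v'" by (auto simp: dom_def)
    then show "finite (dom (v(i := v' i)))"
      using insert.prems(2,3) by (rule finite_subset[OF _ finite_UnI])
  qed (use insert.prems in auto)
  finally show ?case .
qed

lemma map_add_comm_compatible:
  assumes "\<forall>i\<in>dom m1 \<inter> dom m2. m1 i = m2 i"
  shows "m1 ++ m2 = m2 ++ m1"
proof
  fix i
  show "(m1 ++ m2) i = (m2 ++ m1) i"
  proof (cases "i \<in> dom m1 \<inter> dom m2")
    case True
    then show ?thesis using assms by (auto simp: map_add_def)
  next
    case False
    then show ?thesis by (auto simp: map_add_def split: option.split)
  qed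
qed

lemma hbigstep_restrict:
  assumes "hbigstep t s v s'" and "t\<^sub>0 \<subseteq>\<^sub>m t"
  shows "hbigstep t\<^sub>0 s (v |` dom t\<^sub>0) (\<lambda>i. if i \<in> dom t\<^sub>0 then s' i else s i)"
  unfolding hbigstep_def
proof (intro conjI ballI allI impI)
  fix i assume i: "i \<in> dom t\<^sub>0"
  then have "t\<^sub>0 i = t i" using assms(2) by (simp add: map_le_def)
  with i have "i \<in> dom t" by (simp add: domIff)
  then obtain vi where "v i = Some vi" and "bigstep (the (t i)) (s i) vi (s' i)"
    using assms(1) unfolding hbigstep_def by blast
  then show "\<exists>vi. (v |` dom t\<^sub>0) i = Some vi \<and>
      bigstep (the (t\<^sub>0 i)) (s i) vi (if i \<in> dom t\<^sub>0 then s' i else s i)"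
    using i \<open>t\<^sub>0 i = t i\<close> by simp
qed auto

lemma hbigstep_dom:
  assumes "hbigstep t s v s'"
  shows "dom v = dom t"
  using assms unfolding hbigstep_def by (auto simp: dom_def)

lemma wp_frame:
  assumes "t\<^sub>0 \<subseteq>\<^sub>m t" and "finite (dom t)" and "idx Q \<inter> dom t \<subseteq> dom t\<^sub>0"
  shows "entails (wp t\<^sub>0 Q) (wp t Q)"
  unfolding entails_def wp_def
proof (intro allI impI)
  fix s v s'
  assume wp0: "\<forall>v s'. hbigstep t\<^sub>0 s v s' \<longrightarrow> Q v s'" and run: "hbigstep t s v s'"
  define s\<^sub>0 where "s\<^sub>0 = (\<lambda>i. if i \<in> dom t\<^sub>0 then s' i else s i)"
  have "hbigstep t\<^sub>0 s (v |` dom t\<^sub>0) s\<^sub>0"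
    unfolding s\<^sub>0_def using run assms(1) by (rule hbigstep_restrict)
  then have "Q (v |` dom t\<^sub>0) s\<^sub>0" using wp0 by blast
  moreover have "Q (v |` dom t\<^sub>0) s\<^sub>0 \<longleftrightarrow> Q v s'"
  proof (rule post_agree_outside[of "dom t - dom t\<^sub>0"])
    have "dom t\<^sub>0 \<subseteq> dom t" using assms(1) by (rule map_le_implies_dom_le)
    then have "finite (dom t\<^sub>0)" using assms(2) by (rule finite_subset)
    then show "finite (dom (v |` dom t\<^sub>0))" using finite_Int by auto
    show "finite (dom v)" using hbigstep_dom[OF run] assms(2) by simp
    show "\<forall>i. i \<notin> dom t - dom t\<^sub>0 \<longrightarrow> (v |` dom t\<^sub>0) i = v i \<and> s\<^sub>0 i = s' i"
      using run unfolding hbigstep_def s\<^sub>0_def by auto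
  qed (use assms(2,3) in auto)
  ultimately show "Q v s'" by simp
qed

lemma wp_conj:
  "entails (\<lambda>s. wp t Q1 s \<and> wp t Q2 s) (wp t (\<lambda>r s. Q1 r s \<and> Q2 r s))"
  unfolding entails_def wp_def by blast

theorem mainTheorem9:
  fixes t1 t2 :: hterm and Q1 Q2 :: post
  assumes "finite (dom t1)" and "finite (dom t2)"
    and "\<forall>i\<in>dom t1 \<inter> dom t2. t1 i = t2 i"
    and "upward_closed Q1" and "upward_closed Q2"
    and "idx Q1 \<inter> dom t2 \<subseteq> dom t1"
    and "idx Q2 \<inter> dom t1 \<subseteq> dom t2"
  shows "entails (\<lambda>s. wp t1 Q1 s \<and> wp t2 Q2 s) (wp (t1 ++ t2) (\<lambda>r s. Q1 r s \<and> Q2 r s))"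
proof -
  have fin: "finite (dom (t1 ++ t2))" using assms(1,2) by simp
  have "t1 \<subseteq>\<^sub>m t1 ++ t2"
    using map_le_map_add map_add_comm_compatible[OF assms(3)] by metis
  then have frame1: "entails (wp t1 Q1) (wp (t1 ++ t2) Q1)"
    using fin assms(6) by (intro wp_frame) auto
  have frame2: "entails (wp t2 Q2) (wp (t1 ++ t2) Q2)"
    using fin assms(7) by (intro wp_frame) auto
  show ?thesis
    using frame1 frame2 wp_conj[of "t1 ++ t2" Q1 Q2] unfolding entails_def by blast
qed

end
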